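(* Let $N\ge1$, $n=\sum_{\nu=1}^N n_\nu$, $m\ge1$. For $\nu=1,\dots,N$ let $Q_\nu\in\mathbb{R}^{n_\nu\times n_\nu}$ be symmetric positive definite, $c_\nu\in\mathbb{R}^{n_\nu}$, and $X_\nu\subseteq\mathbb{R}^{n_\nu}$ nonempty, convex and closed; let $X=X_1\times\dots\times X_N$. Let $a\in\mathbb{R}^m$, $a\ge0$, $Q_y\in\mathbb{R}^{m\times m}$ positive definite diagonal, and $b,l:\mathbb{R}^n\to\mathbb{R}^m$ differentiable. Define $\varphi(x)=\sum_{i=1}^m a_i\max\{(Q_y^{-1}b(x))_i,l_i(x)\}$ and $\Theta(x)=\sum_{\nu=1}^N[\tfrac12 x_\nu^\top Q_\nu x_\nu+c_\nu^\top x_\nu]+\varphi(x)$. Assume there exist $\rho\ge0$ and $\omega_1,\omega_2\in\mathbb{R}$ such that $\min\{0,\varphi(x)\}\ge\omega_1\|x\|+\omega_2$ for all $x\in X$ with $\|x\|>\rho$. Let $x^*$ be a global minimizer of $\Theta$ over $X$. Then $x^*$ is a Nash equilibrium of the multi-leader-follower game described in the context.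
   Context: Notation: $x=(x_1,\dots,x_N)$, $x_\nu\in\mathbb{R}^{n_\nu}$, $x_{-\nu}$ = all components other than $x_\nu$. Multi-leader-follower game: given $x$, the follower solves $\min_{y\in\mathbb{R}^m}\tfrac12 y^\top Q_y y-b(x)^\top y$ s.t. $y\ge l(x)$, whose unique solution is $y(x)=\max\{Q_y^{-1}b(x),l(x)\}$ (componentwise); leader $\nu$ solves $\min_{x_\nu\in X_\nu}\theta_\nu(x_\nu,x_{-\nu})=\tfrac12 x_\nu^\top Q_\nu x_\nu+c_\nu^\top x_\nu+a^\top y(x)$. A Nash equilibrium is $x^*\in X$ with $\theta_\nu(x^*_\nu,x^*_{-\nu})\le\theta_\nu(x_\nu,x^*_{-\nu})$ for all $x_\nu\in X_\nu$ and all $\nu$. *)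

theory Defs
  imports "HOL-Analysis.Analysis"
begin

text \<open>The decision vector x of all leaders is a vector in real^'n, where the
  finite index type 'n has cardinality n = n_1 + ... + n_N. The map blk :: 'n => 'p assigns
  each coordinate to its leader (players form the finite type 'p, so N >= 1). The block
  x_nu in R^(n_nu) is identified with the vector of real^'n supported on blk^-1(nu).\<close>

definition supported :: "('n \<Rightarrow> 'p) \<Rightarrow> 'p \<Rightarrow> real^'n \<Rightarrow> bool" where
  "supported blk \<nu> v \<longleftrightarrow> (\<forall>i. blk i \<noteq> \<nu> \<longrightarrow> v $ i = 0)"

definition proj :: "('n \<Rightarrow> 'p) \<Rightarrow> 'p \<Rightarrow> real^'n \<Rightarrow> real^'n" where
  "proj blk \<nu> x = (\<chi> i. if blk i = \<nu> then x $ i else 0)"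

definition replace :: "('n \<Rightarrow> 'p) \<Rightarrow> 'p \<Rightarrow> real^'n \<Rightarrow> real^'n \<Rightarrow> real^'n" where
  "replace blk \<nu> x v = (\<chi> i. if blk i = \<nu> then v $ i else x $ i)"

definition prodset :: "('n \<Rightarrow> 'p) \<Rightarrow> ('p \<Rightarrow> (real^'n) set) \<Rightarrow> (real^'n) set" where
  "prodset blk Xs = {x. \<forall>\<nu>. proj blk \<nu> x \<in> Xs \<nu>}"

definition follower :: "real^'m^'m \<Rightarrow> (real^'n \<Rightarrow> real^'m) \<Rightarrow> (real^'n \<Rightarrow> real^'m)
    \<Rightarrow> real^'n \<Rightarrow> real^'m" where
  "follower Qy b l x = (\<chi> i. max ((matrix_inv Qy *v b x) $ i) (l x $ i))"

definition theta :: "('n \<Rightarrow> 'p) \<Rightarrow> ('p \<Rightarrow> real^'n^'n) \<Rightarrow> ('p \<Rightarrow> real^'n) \<Rightarrow> real^'m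
    \<Rightarrow> real^'m^'m \<Rightarrow> (real^'n \<Rightarrow> real^'m) \<Rightarrow> (real^'n \<Rightarrow> real^'m) \<Rightarrow> 'p \<Rightarrow> real^'n \<Rightarrow> real" where
  "theta blk Q c a Qy b l \<nu> x =
     (1/2) * (proj blk \<nu> x \<bullet> (Q \<nu> *v proj blk \<nu> x)) + c \<nu> \<bullet> proj blk \<nu> x
     + a \<bullet> follower Qy b l x"

definition nash_equilibrium :: "('n \<Rightarrow> 'p) \<Rightarrow> ('p \<Rightarrow> (real^'n) set) \<Rightarrow> ('p \<Rightarrow> real^'n^'n)
    \<Rightarrow> ('p \<Rightarrow> real^'n) \<Rightarrow> real^'m \<Rightarrow> real^'m^'m \<Rightarrow> (real^'n \<Rightarrow> real^'m) \<Rightarrow> (real^'n \<Rightarrow> real^'m)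
    \<Rightarrow> real^'n \<Rightarrow> bool" where
  "nash_equilibrium blk Xs Q c a Qy b l xs \<longleftrightarrow>
     xs \<in> prodset blk Xs \<and>
     (\<forall>\<nu>. \<forall>v \<in> Xs \<nu>. theta blk Q c a Qy b l \<nu> xs \<le> theta blk Q c a Qy b l \<nu> (replace blk \<nu> xs v))"

end

theory Submission
  imports Defs
begin

text \<open>The game is a potential game with potential \<Theta>: the objective of leader \<nu> is the
  part of \<Theta> that depends on the block x_\<nu>, and the remaining summands of \<Theta> do not change
  when only x_\<nu> is replaced. A unilateral deviation lowering the objective of leader \<nu> would
  therefore lower \<Theta> by the same amount, contradicting global minimality. In the paper, positive
  definiteness, convexity, closedness, differentiability and the growth condition ensure that a
  global minimizer exists.\<close>

lemma proj_replace_same: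
  assumes "supported blk \<nu> v"
  shows "proj blk \<nu> (replace blk \<nu> x v) = v"
  using assms unfolding proj_def replace_def supported_def by (auto simp: vec_eq_iff)

lemma proj_replace_other:
  assumes "\<mu> \<noteq> \<nu>"
  shows "proj blk \<mu> (replace blk \<nu> x v) = proj blk \<mu> x"
  using assms unfolding proj_def replace_def by (auto simp: vec_eq_iff)

lemma replace_in_prodset:
  assumes "x \<in> prodset blk Xs" and "v \<in> Xs \<nu>" and "supported blk \<nu> v"
  shows "replace blk \<nu> x v \<in> prodset blk Xs"
proof -
  have "proj blk \<mu> (replace blk \<nu> x v) \<in> Xs \<mu>" for \<mu>
    using assms unfolding prodset_def
    by (cases "\<mu> = \<nu>") (simp_all add: proj_replace_same proj_replace_other)
  then show ?thesis
    unfolding prodset_def by blast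
qed

lemma sum_proj_replace:
  fixes f :: "'p::finite \<Rightarrow> real^'n \<Rightarrow> 'a::ab_group_add"
  assumes "supported blk \<nu> v"
  shows "(\<Sum>\<mu>\<in>UNIV. f \<mu> (proj blk \<mu> (replace blk \<nu> x v)))
           = (\<Sum>\<mu>\<in>UNIV. f \<mu> (proj blk \<mu> x)) - f \<nu> (proj blk \<nu> x) + f \<nu> v"
proof -
  have "(\<Sum>\<mu>\<in>UNIV. f \<mu> (proj blk \<mu> (replace blk \<nu> x v)))
          = f \<nu> v + (\<Sum>\<mu>\<in>UNIV - {\<nu>}. f \<mu> (proj blk \<mu> x))"
    by (simp add: sum.remove[of UNIV \<nu>] proj_replace_same[OF assms] proj_replace_other)
  also have "\<dots> = (\<Sum>\<mu>\<in>UNIV. f \<mu> (proj blk \<mu> x)) - f \<nu> (proj blk \<nu> x) + f \<nu> v"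
    by (simp add: sum.remove[of UNIV \<nu>])
  finally show ?thesis .
qed

lemma potential_minimizer_no_profitable_deviation:
  fixes f :: "'p::finite \<Rightarrow> real^'n \<Rightarrow> real" and g :: "real^'n \<Rightarrow> real"
  assumes min: "\<And>z. z \<in> prodset blk Xs \<Longrightarrow>
      (\<Sum>\<mu>\<in>UNIV. f \<mu> (proj blk \<mu> x)) + g x \<le> (\<Sum>\<mu>\<in>UNIV. f \<mu> (proj blk \<mu> z)) + g z"
    and x: "x \<in> prodset blk Xs" and v: "v \<in> Xs \<nu>" and supp: "supported blk \<nu> v"
  shows "f \<nu> (proj blk \<nu> x) + g x \<le> f \<nu> (proj blk \<nu> (replace blk \<nu> x v)) + g (replace blk \<nu> x v)"
  using min[OF replace_in_prodset[OF x v supp]]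
  unfolding sum_proj_replace[OF supp] proj_replace_same[OF supp] by simp

lemma theta_split:
  "theta blk Q c a Qy b l \<nu> x =
     ((1/2) * (proj blk \<nu> x \<bullet> (Q \<nu> *v proj blk \<nu> x)) + c \<nu> \<bullet> proj blk \<nu> x)
     + (\<Sum>i\<in>UNIV. a $ i * max ((matrix_inv Qy *v b x) $ i) (l x $ i))"
  unfolding theta_def follower_def inner_vec_def by simp

theorem mainTheorem4:
  fixes blk :: "'n::finite \<Rightarrow> 'p::finite"
    and Q :: "'p \<Rightarrow> real^'n^'n" and c :: "'p \<Rightarrow> real^'n" and Xs :: "'p \<Rightarrow> (real^'n) set"
    and a :: "real^'m::finite" and Qy :: "real^'m^'m"
    and b l :: "real^'n \<Rightarrow> real^'m"
    and \<rho> \<omega>1 \<omega>2 :: real and xs :: "real^'n"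
  assumes blocks_nonempty: "surj blk"
    and Q_block: "\<And>\<nu> i j. blk i \<noteq> \<nu> \<or> blk j \<noteq> \<nu> \<Longrightarrow> Q \<nu> $ i $ j = 0"
    and Q_sym: "\<And>\<nu>. transpose (Q \<nu>) = Q \<nu>"
    and Q_pd: "\<And>\<nu> v. supported blk \<nu> v \<Longrightarrow> v \<noteq> 0 \<Longrightarrow> v \<bullet> (Q \<nu> *v v) > 0"
    and c_block: "\<And>\<nu>. supported blk \<nu> (c \<nu>)"
    and X_sub: "\<And>\<nu>. Xs \<nu> \<subseteq> {v. supported blk \<nu> v}"
    and X_ne: "\<And>\<nu>. Xs \<nu> \<noteq> {}"
    and X_convex: "\<And>\<nu>. convex (Xs \<nu>)"
    and X_closed: "\<And>\<nu>. closed (Xs \<nu>)"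
    and a_nonneg: "\<And>i. a $ i \<ge> 0"
    and Qy_diag: "\<And>i j. i \<noteq> j \<Longrightarrow> Qy $ i $ j = 0"
    and Qy_pos: "\<And>i. Qy $ i $ i > 0"
    and b_diff: "\<And>x. b differentiable (at x)"
    and l_diff: "\<And>x. l differentiable (at x)"
    and \<rho>_nonneg: "\<rho> \<ge> 0"
    and growth: "\<And>x. x \<in> prodset blk Xs \<Longrightarrow> norm x > \<rho> \<Longrightarrow>
        min 0 (\<Sum>i\<in>UNIV. a $ i * max ((matrix_inv Qy *v b x) $ i) (l x $ i)) \<ge> \<omega>1 * norm x + \<omega>2"
    and xs_min: "xs \<in> prodset blk Xs"
    and xs_glob: "\<And>x. x \<in> prodset blk Xs \<Longrightarrow>
        (\<Sum>\<nu>\<in>UNIV. (1/2) * (proj blk \<nu> xs \<bullet> (Q \<nu> *v proj blk \<nu> xs)) + c \<nu> \<bullet> proj blk \<nu> xs)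
          + (\<Sum>i\<in>UNIV. a $ i * max ((matrix_inv Qy *v b xs) $ i) (l xs $ i))
        \<le> (\<Sum>\<nu>\<in>UNIV. (1/2) * (proj blk \<nu> x \<bullet> (Q \<nu> *v proj blk \<nu> x)) + c \<nu> \<bullet> proj blk \<nu> x)
          + (\<Sum>i\<in>UNIV. a $ i * max ((matrix_inv Qy *v b x) $ i) (l x $ i))"
  shows "nash_equilibrium blk Xs Q c a Qy b l xs"
  unfolding nash_equilibrium_def
proof (intro conjI xs_min allI ballI)
  fix \<nu> v
  assume v: "v \<in> Xs \<nu>"
  then have "supported blk \<nu> v"
    using X_sub by blast
  from potential_minimizer_no_profitable_deviation
      [where f = "\<lambda>\<mu> w. (1/2) * (w \<bullet> (Q \<mu> *v w)) + c \<mu> \<bullet> w"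
         and g = "\<lambda>x. \<Sum>i\<in>UNIV. a $ i * max ((matrix_inv Qy *v b x) $ i) (l x $ i)",
       OF xs_glob xs_min v this]
  show "theta blk Q c a Qy b l \<nu> xs \<le> theta blk Q c a Qy b l \<nu> (replace blk \<nu> xs v)"
    by (simp only: theta_split)
qed

end
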